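(* Suppose we have $n\ge3$ agents with additive, identical, normalized valuations, provided with a prediction of accuracy $\eta<1-\frac{1-a^2}{4+(2n-3)a}$ for some given $a\in(0,1]$; that is, the allowed error between the prediction and the true valuation is $1-\eta>\frac{1-a^2}{4+(2n-3)a}$. Then there is no online algorithm that guarantees an $a$-EFX allocation for all instances with error at most $1-\eta$, even when $T'=T=2n-1$ and the prediction and the true valuation are $3$-value functions.
   Context: Online fair division with predictions and identical valuations: agents $[n]$; goods $g_1,\dots,g_T$ arrive one per time step; all agents share a true additive normalized valuation $v$ ($v(g_t)\ge0$, $\sum_{t\in[T]}v(g_t)=1$, $v(S)=\sum_{g\in S}v(g)$), and before any arrival the algorithm receives a prediction $p=(p(g_1),\dots,p(g_{T'}))$ (an additive normalized valuation over $T'$ predicted goods) and the accuracy level. Error $\frac12\sum_{t=1}^{\max\{T,T'\}}|p(g_t)-v(g_t)|$ (missing entries set to $0$); accuracy $\eta$ means the error is at most $1-\eta$. At time $t$, $v(g_t)$ is revealed and $g_t$ must be irrevocably allocated. For $S\ne\emptyset$, $\bar S=S\setminus\{g\}$ with $g\in\arg\max_{g'\in S}v(S\setminus\{g'\})$, $\bar\emptyset=\emptyset$. An allocation is $a$-EFX if $v(A_i)\ge a\cdot v(\bar A_j)$ for all $i,j$. A function is $k$-value if it takes at most $k$ distinct values. *)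

theory Defs
  imports Complex_Main
begin

text \<open>Goods are indexed 0,...,T-1; a valuation over T goods is a real list of length T.
  Agents are 0,...,n-1.\<close>

definition entry :: "real list \<Rightarrow> nat \<Rightarrow> real" where
  "entry xs t = (if t < length xs then xs ! t else 0)"

definition normalized_valuation :: "real list \<Rightarrow> bool" where
  "normalized_valuation v \<longleftrightarrow> (\<forall>t < length v. v ! t \<ge> 0) \<and> sum_list v = 1"

definition pred_error :: "real list \<Rightarrow> real list \<Rightarrow> real" where
  "pred_error p v = (1/2) * (\<Sum>t < max (length v) (length p). \<bar>entry p t - entry v t\<bar>)"

definition k_value :: "nat \<Rightarrow> real list \<Rightarrow> bool" where
  "k_value k v \<longleftrightarrow> card (set v) \<le> k"

definition bval :: "real list \<Rightarrow> nat set \<Rightarrow> real" where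
  "bval v S = (\<Sum>t\<in>S. entry v t)"

definition bval_bar :: "real list \<Rightarrow> nat set \<Rightarrow> real" where
  "bval_bar v S = (if S = {} then 0 else Max ((\<lambda>g. bval v (S - {g})) ` S))"

definition is_aEFX :: "real \<Rightarrow> nat \<Rightarrow> real list \<Rightarrow> (nat \<Rightarrow> nat set) \<Rightarrow> bool" where
  "is_aEFX a n v A \<longleftrightarrow> (\<forall>i < n. \<forall>j < n. bval v (A i) \<ge> a * bval_bar v (A j))"

text \<open>A deterministic online algorithm gets the prediction p and the values of the goods
  revealed so far (v(g_1),...,v(g_t)) and returns the agent receiving g_t.\<close>
definition online_alloc :: "(real list \<Rightarrow> real list \<Rightarrow> nat) \<Rightarrow> real list \<Rightarrow> real list \<Rightarrow> nat \<Rightarrow> nat set" where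
  "online_alloc alg p v i = {t. t < length v \<and> alg p (take (Suc t) v) = i}"

end

theory Submission
  imports Defs
begin

text \<open>Goods are indexed from 0; the
  adversary predicts 2n - 2 goods of a tiny value \<epsilon> followed by a large last good carrying the
  remaining mass. If the algorithm gives two of the goods 0, ..., n - 2 to one agent, all later
  small goods are revealed to be worthless: at most n - 1 agents then own a valuable good, so some
  agent has value 0 while another holds two goods worth \<epsilon>. Otherwise good n is revealed to be
  worth 2n\<epsilon>/a. The n + 1 goods 0, ..., n - 2, n and the last one cannot go to n agents
  injectively, and whichever of good n or the last good repeats an agent is envied beyond the
  factor a by an agent holding only small goods. Both perturbations cost O(\<epsilon>) prediction error.\<close>

definition completed_valuation :: "nat \<Rightarrow> (nat \<Rightarrow> real) \<Rightarrow> real list" where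
  "completed_valuation L g = map (\<lambda>t. if t < L then g t else 1 - (\<Sum>s<L. g s)) [0..<Suc L]"

lemma length_completed_valuation [simp]: "length (completed_valuation L g) = Suc L"
  by (simp add: completed_valuation_def)

lemma entry_completed_valuation:
  "entry (completed_valuation L g) t =
     (if t < L then g t else if t = L then 1 - (\<Sum>s<L. g s) else 0)"
  by (auto simp add: entry_def completed_valuation_def nth_append simp del: upt_Suc)

lemma sum_list_completed_valuation: "sum_list (completed_valuation L g) = 1"
proof -
  have "sum_list (completed_valuation L g) = (\<Sum>t<Suc L. entry (completed_valuation L g) t)"
    by (simp add: sum_list_sum_nth entry_def atLeast0LessThan)
  then show ?thesis by (simp add: entry_completed_valuation)
qed

lemma normalized_completed_valuation:
  assumes "\<And>t. t < L \<Longrightarrow> g t \<ge> 0" and "(\<Sum>t<L. g t) \<le> 1"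
  shows "normalized_valuation (completed_valuation L g)"
  using assms sum_list_completed_valuation[of L g]
  by (auto simp add: normalized_valuation_def completed_valuation_def nth_append simp del: upt_Suc)

lemma k_value_completed_valuation:
  assumes "g ` {..<L} \<subseteq> {x, y}"
  shows "k_value 3 (completed_valuation L g)"
proof -
  have "set (completed_valuation L g) \<subseteq> {x, y, 1 - (\<Sum>t<L. g t)}"
    using assms by (auto simp add: completed_valuation_def image_subset_iff)
  then have "card (set (completed_valuation L g)) \<le> card {x, y, 1 - (\<Sum>t<L. g t)}"
    by (intro card_mono) auto
  also have "\<dots> \<le> 3"
    by (simp add: card_insert_if)
  finally show ?thesis
    unfolding k_value_def .
qed

lemma pred_error_completed_valuation_le:
  "pred_error (completed_valuation L g) (completed_valuation L h) \<le> (\<Sum>t<L. \<bar>g t - h t\<bar>)"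
proof -
  have "\<bar>(\<Sum>t<L. h t) - (\<Sum>t<L. g t)\<bar> = \<bar>\<Sum>t<L. g t - h t\<bar>"
    by (simp add: sum_subtractf)
  also have "\<dots> \<le> (\<Sum>t<L. \<bar>g t - h t\<bar>)"
    by (rule sum_abs)
  finally show ?thesis
    by (simp add: pred_error_def entry_completed_valuation)
qed

lemma take_completed_valuation_eq:
  assumes "t < L" and "\<And>s. s \<le> t \<Longrightarrow> g s = h s"
  shows "take (Suc t) (completed_valuation L g) = take (Suc t) (completed_valuation L h)"
proof -
  have "take (Suc t) [0..<Suc L] = [0..<Suc t]"
    using assms(1) by (simp add: take_upt del: upt_Suc)
  then show ?thesis
    using assms unfolding completed_valuation_def by (simp add: take_map del: upt_Suc)
qed

lemma bval_completed_valuation: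
  "S \<subseteq> {..<L} \<Longrightarrow> bval (completed_valuation L g) S = (\<Sum>t\<in>S. g t)"
  unfolding bval_def by (intro sum.cong) (auto simp add: entry_completed_valuation)

lemma entry_nonneg: "normalized_valuation v \<Longrightarrow> 0 \<le> entry v t"
  by (auto simp add: normalized_valuation_def entry_def)

lemma bval_mono: "normalized_valuation v \<Longrightarrow> A \<subseteq> B \<Longrightarrow> finite B \<Longrightarrow> bval v A \<le> bval v B"
  unfolding bval_def by (rule sum_mono2) (auto intro: entry_nonneg)

lemma not_aEFX_if_envious:
  assumes "normalized_valuation v" and "0 \<le> a" and "i < n" and "k < n"
    and "finite (A k)" and "s \<in> A k" and "t \<in> A k" and "s \<noteq> t"
    and "bval v (A i) < a * entry v t"
  shows "\<not> is_aEFX a n v A"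
proof -
  have "entry v t \<le> bval v (A k - {s})"
    unfolding bval_def using assms by (intro member_le_sum) (auto intro: entry_nonneg)
  also have "\<dots> \<le> bval_bar v (A k)"
    unfolding bval_bar_def using assms by (auto intro: Max_ge)
  finally have "bval v (A i) < a * bval_bar v (A k)"
    using assms(2,9) by (meson less_le_trans mult_left_mono)
  then show ?thesis
    unfolding is_aEFX_def using assms(3,4) by force
qed

lemma ex_less_notin: "finite K \<Longrightarrow> card K < n \<Longrightarrow> \<exists>i<n. i \<notin> K"
  by (metis card_lessThan card_mono lessThan_iff not_le subsetI)

lemma finite_online_alloc: "finite (online_alloc alg p v i)"
  unfolding online_alloc_def by auto

definition valid_instance :: "nat \<Rightarrow> real \<Rightarrow> real list \<Rightarrow> real list \<Rightarrow> bool" where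
  "valid_instance N err p v \<longleftrightarrow>
     length p = N \<and> length v = N \<and> normalized_valuation p \<and> normalized_valuation v \<and>
     k_value 3 p \<and> k_value 3 v \<and> pred_error p v \<le> err"

lemma valid_instance_completed_valuation:
  assumes "normalized_valuation (completed_valuation L g)"
    and "normalized_valuation (completed_valuation L h)"
    and "g ` {..<L} \<subseteq> {x, y}" and "h ` {..<L} \<subseteq> {x', y'}"
    and "(\<Sum>t<L. \<bar>g t - h t\<bar>) \<le> err"
  shows "valid_instance (Suc L) err (completed_valuation L g) (completed_valuation L h)"
  unfolding valid_instance_def
  using assms k_value_completed_valuation pred_error_completed_valuation_le[of L g h]
  by auto

definition flat_prediction :: "nat \<Rightarrow> real \<Rightarrow> real list" where
  "flat_prediction n \<epsilon> = completed_valuation (2*n - 2) (\<lambda>_. \<epsilon>)"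

definition spiked_valuation :: "nat \<Rightarrow> real \<Rightarrow> real \<Rightarrow> real list" where
  "spiked_valuation n \<epsilon> X = completed_valuation (2*n - 2) (\<lambda>t. if t = n then X * \<epsilon> else \<epsilon>)"

definition truncated_valuation :: "nat \<Rightarrow> real \<Rightarrow> nat \<Rightarrow> real list" where
  "truncated_valuation n \<epsilon> j = completed_valuation (2*n - 2) (\<lambda>t. if t \<le> j then \<epsilon> else 0)"

lemma sum_spike_le:
  assumes "0 \<le> \<epsilon>" and "0 \<le> X"
  shows "(\<Sum>t<L. if t = n then X * \<epsilon> else \<epsilon>) \<le> (real L + X) * \<epsilon>"
proof -
  have "(\<Sum>t<L. if t = n then X * \<epsilon> else \<epsilon>) \<le> (\<Sum>t<L. \<epsilon> + (if t = n then X * \<epsilon> else 0))"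
    using assms by (intro sum_mono) auto
  also have "\<dots> \<le> real L * \<epsilon> + X * \<epsilon>"
    using assms by (simp add: sum.distrib)
  finally show ?thesis
    by (simp add: distrib_right)
qed

lemma normalized_flat_prediction:
  "0 \<le> \<epsilon> \<Longrightarrow> real (2*n - 2) * \<epsilon> \<le> 1 \<Longrightarrow> normalized_valuation (flat_prediction n \<epsilon>)"
  unfolding flat_prediction_def by (intro normalized_completed_valuation) auto

lemma normalized_spiked_valuation:
  assumes "0 \<le> \<epsilon>" and "0 \<le> X" and "(real (2*n - 2) + X) * \<epsilon> \<le> 1"
  shows "normalized_valuation (spiked_valuation n \<epsilon> X)"
  unfolding spiked_valuation_def
  using assms sum_spike_le[OF assms(1,2), where L = "2*n - 2" and n = n]
  by (intro normalized_completed_valuation) auto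

lemma normalized_truncated_valuation:
  assumes "0 \<le> \<epsilon>" and "real (2*n - 2) * \<epsilon> \<le> 1"
  shows "normalized_valuation (truncated_valuation n \<epsilon> j)"
  unfolding truncated_valuation_def
proof (rule normalized_completed_valuation)
  have "(\<Sum>t<2*n - 2. if t \<le> j then \<epsilon> else 0) \<le> (\<Sum>t<2*n - 2. \<epsilon>)"
    using assms(1) by (intro sum_mono) auto
  then show "(\<Sum>t<2*n - 2. if t \<le> j then \<epsilon> else 0) \<le> 1"
    using assms(2) by simp
qed (use assms(1) in auto)

lemma valid_instance_spiked_valuation:
  assumes "1 \<le> n" and "0 \<le> \<epsilon>" and "1 \<le> X" and total: "(real (2*n - 2) + X) * \<epsilon> \<le> min err 1"
  shows "valid_instance (2*n - 1) err (flat_prediction n \<epsilon>) (spiked_valuation n \<epsilon> X)"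
proof -
  have "\<epsilon> \<le> X * \<epsilon>" and "0 \<le> real (2*n - 2) * \<epsilon>"
    using assms(2,3) by (simp_all add: mult_le_cancel_right1)
  then have "(\<Sum>t<2*n - 2. \<bar>\<epsilon> - (if t = n then X * \<epsilon> else \<epsilon>)\<bar>) \<le> (\<Sum>t<2*n - 2. if t = n then X * \<epsilon> else 0)"
    using assms(2) by (intro sum_mono) auto
  also have "\<dots> \<le> X * \<epsilon>"
    using \<open>\<epsilon> \<le> X * \<epsilon>\<close> assms(2) by simp
  also have "\<dots> \<le> err"
    using total \<open>0 \<le> real (2*n - 2) * \<epsilon>\<close> unfolding distrib_right by linarith
  finally have error: "(\<Sum>t<2*n - 2. \<bar>\<epsilon> - (if t = n then X * \<epsilon> else \<epsilon>)\<bar>) \<le> err" .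
  have "normalized_valuation (flat_prediction n \<epsilon>)" and "normalized_valuation (spiked_valuation n \<epsilon> X)"
    using \<open>\<epsilon> \<le> X * \<epsilon>\<close> assms(2,3) total
    by (auto intro!: normalized_flat_prediction normalized_spiked_valuation simp add: distrib_right)
  then have "valid_instance (Suc (2*n - 2)) err (flat_prediction n \<epsilon>) (spiked_valuation n \<epsilon> X)"
    using error unfolding flat_prediction_def spiked_valuation_def
    by (intro valid_instance_completed_valuation[where x = \<epsilon> and y = \<epsilon> and x' = "X * \<epsilon>" and y' = \<epsilon>])
      auto
  moreover have "Suc (2*n - 2) = 2*n - 1"
    using assms(1) by simp
  ultimately show ?thesis
    by simp
qed

lemma valid_instance_truncated_valuation:
  assumes "1 \<le> n" and "0 \<le> \<epsilon>" and total: "real (2*n - 2) * \<epsilon> \<le> min err 1"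
  shows "valid_instance (2*n - 1) err (flat_prediction n \<epsilon>) (truncated_valuation n \<epsilon> j)"
proof -
  have "(\<Sum>t<2*n - 2. \<bar>\<epsilon> - (if t \<le> j then \<epsilon> else 0)\<bar>) \<le> (\<Sum>t<2*n - 2. \<epsilon>)"
    using assms(2) by (intro sum_mono) auto
  then have "(\<Sum>t<2*n - 2. \<bar>\<epsilon> - (if t \<le> j then \<epsilon> else 0)\<bar>) \<le> err"
    using total by simp
  moreover have "normalized_valuation (flat_prediction n \<epsilon>)"
    and "normalized_valuation (truncated_valuation n \<epsilon> j)"
    using assms(2) total by (auto intro!: normalized_flat_prediction normalized_truncated_valuation)
  ultimately have "valid_instance (Suc (2*n - 2)) err (flat_prediction n \<epsilon>) (truncated_valuation n \<epsilon> j)"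
    unfolding flat_prediction_def truncated_valuation_def
    by (intro valid_instance_completed_valuation[where x = \<epsilon> and y = \<epsilon> and x' = \<epsilon> and y' = 0])
      auto
  moreover have "Suc (2*n - 2) = 2*n - 1"
    using assms(1) by simp
  ultimately show ?thesis
    by simp
qed

lemma truncated_not_aEFX_if_collision:
  fixes alg :: "real list \<Rightarrow> real list \<Rightarrow> nat" and n j :: nat and \<epsilon> :: real
  defines "w \<equiv> truncated_valuation n \<epsilon> j"
  assumes agents: "\<forall>p vs. alg p vs < n" and "0 < a"
    and "0 < \<epsilon>" and total_small: "real (2*n - 2) * \<epsilon> \<le> 1"
    and "i < j" and "j < n - 1"
    and collision: "alg p (take (Suc i) w) = alg p (take (Suc j) w)"
  shows "\<not> is_aEFX a n w (online_alloc alg p w)"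
proof -
  define L where "L = 2*n - 2"
  define f where "f t = alg p (take (Suc t) w)" for t
  have alloc: "online_alloc alg p w k = {t. t < Suc L \<and> f t = k}" for k
    unfolding online_alloc_def f_def w_def truncated_valuation_def L_def by simp
  have "j < L"
    using \<open>j < n - 1\<close> unfolding L_def by linarith
  have "f j = f i"
    using collision unfolding f_def by simp
  moreover have "{..j} = insert j {..<j}"
    by auto
  ultimately have "f ` {..j} = f ` {..<j}"
    using \<open>i < j\<close> by (metis image_eqI image_insert insert_absorb lessThan_iff)
  then have "card (insert (f L) (f ` {..j})) \<le> Suc (card (f ` {..<j}))"
    by (simp add: card_insert_if)
  moreover have "card (f ` {..<j}) \<le> j"
    using card_image_le[of "{..<j}" f] by simp
  ultimately have "card (insert (f L) (f ` {..j})) < n"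
    using \<open>j < n - 1\<close> by linarith
  then have "\<exists>i0<n. i0 \<notin> insert (f L) (f ` {..j})"
    by (intro ex_less_notin) simp_all
  then obtain i0 where "i0 < n" and "i0 \<notin> insert (f L) (f ` {..j})"
    by blast
  have entry_w: "entry w t = (if t \<le> j then \<epsilon> else 0)" if "t < L" for t
    using that unfolding w_def truncated_valuation_def L_def by (simp add: entry_completed_valuation)
  have "bval w (online_alloc alg p w i0) = 0"
    unfolding bval_def alloc
    using \<open>i0 \<notin> insert (f L) (f ` {..j})\<close> by (intro sum.neutral) (auto simp add: entry_w less_Suc_eq)
  moreover have "entry w j = \<epsilon>"
    using \<open>j < L\<close> by (simp add: entry_w)
  moreover have "i \<in> online_alloc alg p w (f j)" and "j \<in> online_alloc alg p w (f j)"
    using alloc collision \<open>i < j\<close> \<open>j < L\<close> unfolding f_def by auto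
  moreover have "normalized_valuation w"
    unfolding w_def using \<open>0 < \<epsilon>\<close> total_small by (intro normalized_truncated_valuation) auto
  ultimately show ?thesis
    using \<open>0 < a\<close> \<open>0 < \<epsilon>\<close> \<open>i0 < n\<close> \<open>i < j\<close> agents
    by (intro not_aEFX_if_envious[where i = i0 and k = "f j" and s = i and t = j])
      (auto simp add: finite_online_alloc f_def)
qed

lemma spiked_not_aEFX_if_last_good_shared:
  fixes alg :: "real list \<Rightarrow> real list \<Rightarrow> nat" and n :: nat and \<epsilon> X :: real
  defines "v \<equiv> spiked_valuation n \<epsilon> X"
  assumes agents: "\<forall>p vs. alg p vs < n" and "2 \<le> n" and "0 < a" and "a \<le> 1"
    and "0 \<le> \<epsilon>" and "0 \<le> X" and total_small: "(real (2*n - 2) + X) * \<epsilon> \<le> a / 4"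
    and "s < 2*n - 2" and shared: "alg p (take (Suc s) v) = alg p (take (Suc (2*n - 2)) v)"
  shows "\<not> is_aEFX a n v (online_alloc alg p v)"
proof -
  define L where "L = 2*n - 2"
  define g :: "nat \<Rightarrow> real" where "g = (\<lambda>t. if t = n then X * \<epsilon> else \<epsilon>)"
  define f where "f t = alg p (take (Suc t) v)" for t
  have v: "v = completed_valuation L g"
    unfolding v_def spiked_valuation_def L_def g_def ..
  have alloc: "online_alloc alg p v k = {t. t < Suc L \<and> f t = k}" for k
    unfolding online_alloc_def f_def v by simp
  have "(\<Sum>t<L. g t) \<le> (real L + X) * \<epsilon>"
    unfolding g_def using \<open>0 \<le> \<epsilon>\<close> \<open>0 \<le> X\<close> by (rule sum_spike_le)
  then have small: "(\<Sum>t<L. g t) \<le> a / 4"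
    using total_small unfolding L_def by linarith
  have normalized: "normalized_valuation v"
    unfolding v_def using \<open>0 \<le> \<epsilon>\<close> \<open>0 \<le> X\<close> total_small \<open>a \<le> 1\<close>
    by (intro normalized_spiked_valuation) auto
  have "\<exists>i0<n. i0 \<notin> {f L}"
    using \<open>2 \<le> n\<close> by (intro ex_less_notin) auto
  then obtain i0 where "i0 < n" and "i0 \<noteq> f L"
    by blast
  then have "online_alloc alg p v i0 \<subseteq> {..<L}"
    unfolding alloc by (auto simp add: less_Suc_eq)
  then have "bval v (online_alloc alg p v i0) \<le> bval v {..<L}"
    using normalized by (intro bval_mono) auto
  also have "\<dots> = (\<Sum>t<L. g t)"
    unfolding v by (simp add: bval_completed_valuation)
  also have "\<dots> < a * (1 - (\<Sum>t<L. g t))"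
  proof -
    have "a * (\<Sum>t<L. g t) \<le> a * (1 / 4)"
      using small \<open>0 < a\<close> \<open>a \<le> 1\<close> by (intro mult_left_mono) auto
    then show ?thesis
      using small \<open>0 < a\<close> unfolding right_diff_distrib mult_1_right by linarith
  qed
  also have "1 - (\<Sum>t<L. g t) = entry v L"
    unfolding v by (simp add: entry_completed_valuation)
  finally have "bval v (online_alloc alg p v i0) < a * entry v L" .
  moreover have "s \<in> online_alloc alg p v (f L)" and "L \<in> online_alloc alg p v (f L)"
    using alloc shared \<open>s < 2*n - 2\<close> unfolding f_def L_def by auto
  ultimately show ?thesis
    using normalized \<open>0 < a\<close> \<open>i0 < n\<close> \<open>s < 2*n - 2\<close> agents
    by (intro not_aEFX_if_envious[where i = i0 and k = "f L" and s = s and t = L])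
      (auto simp add: finite_online_alloc f_def L_def)
qed

lemma spiked_not_aEFX_if_spike_shared:
  fixes alg :: "real list \<Rightarrow> real list \<Rightarrow> nat" and n :: nat and \<epsilon> X :: real
  defines "v \<equiv> spiked_valuation n \<epsilon> X"
  assumes agents: "\<forall>p vs. alg p vs < n" and "3 \<le> n" and "0 < a" and "0 < \<epsilon>" and "0 \<le> X"
    and spike_large: "2 * real n \<le> a * X"
    and total_small: "(real (2*n - 2) + X) * \<epsilon> \<le> 1"
    and "s < n" and shared: "alg p (take (Suc s) v) = alg p (take (Suc n) v)"
  shows "\<not> is_aEFX a n v (online_alloc alg p v)"
proof -
  define L where "L = 2*n - 2"
  define g :: "nat \<Rightarrow> real" where "g = (\<lambda>t. if t = n then X * \<epsilon> else \<epsilon>)"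
  define f where "f t = alg p (take (Suc t) v)" for t
  have v: "v = completed_valuation L g"
    unfolding v_def spiked_valuation_def L_def g_def ..
  have alloc: "online_alloc alg p v k = {t. t < Suc L \<and> f t = k}" for k
    unfolding online_alloc_def f_def v by simp
  have "n < L"
    using \<open>3 \<le> n\<close> unfolding L_def by linarith
  have normalized: "normalized_valuation v"
    unfolding v_def using \<open>0 < \<epsilon>\<close> \<open>0 \<le> X\<close> total_small
    by (intro normalized_spiked_valuation) auto
  have "card {f n, f L} < n"
    using \<open>3 \<le> n\<close> by (simp add: card_insert_if)
  then have "\<exists>i0<n. i0 \<notin> {f n, f L}"
    by (intro ex_less_notin) auto
  then obtain i0 where "i0 < n" and "i0 \<noteq> f n" and "i0 \<noteq> f L"
    by blast
  then have "online_alloc alg p v i0 \<subseteq> {..<L} - {n}"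
    unfolding alloc by (auto simp add: less_Suc_eq)
  then have "bval v (online_alloc alg p v i0) \<le> bval v ({..<L} - {n})"
    using normalized by (intro bval_mono) auto
  also have "\<dots> = (\<Sum>t\<in>{..<L} - {n}. \<epsilon>)"
    unfolding v by (simp add: bval_completed_valuation g_def)
  also have "\<dots> \<le> real L * \<epsilon>"
    using \<open>0 < \<epsilon>\<close> \<open>n < L\<close> by simp
  also have "\<dots> < 2 * real n * \<epsilon>"
    using \<open>0 < \<epsilon>\<close> \<open>3 \<le> n\<close> unfolding L_def by (simp add: of_nat_diff)
  also have "\<dots> \<le> a * (X * \<epsilon>)"
    using spike_large \<open>0 < \<epsilon>\<close> by (simp add: mult.assoc[symmetric])
  also have "X * \<epsilon> = entry v n"
    unfolding v using \<open>n < L\<close> by (simp add: entry_completed_valuation g_def)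
  finally have "bval v (online_alloc alg p v i0) < a * entry v n" .
  moreover have "s \<in> online_alloc alg p v (f n)" and "n \<in> online_alloc alg p v (f n)"
    using alloc shared \<open>s < n\<close> \<open>n < L\<close> unfolding f_def by auto
  ultimately show ?thesis
    using normalized \<open>0 < a\<close> \<open>i0 < n\<close> \<open>s < n\<close> agents
    by (intro not_aEFX_if_envious[where i = i0 and k = "f n" and s = s and t = n])
      (auto simp add: finite_online_alloc f_def)
qed

lemma agent_collision_cases:
  fixes f :: "nat \<Rightarrow> nat"
  assumes "\<forall>t. f t < n" and "n < L"
  obtains (early) i j where "i < j" and "j < n - 1" and "f i = f j"
    | (spike) s where "s < n" and "f s = f n"
    | (last) s where "s < L" and "f s = f L"
proof -
  define S where "S = insert L (insert n {..<n - 1})"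
  have "card (f ` S) \<le> card {..<n}"
    using assms(1) by (intro card_mono) auto
  also have "\<dots> < card S"
    unfolding S_def using \<open>n < L\<close> by simp
  finally have "\<not> inj_on f S"
    by (metis card_image less_irrefl)
  then obtain s t where "s \<in> S" and "t \<in> S" and "s < t" and "f s = f t"
    by (meson linorder_inj_onI')
  moreover from \<open>t \<in> S\<close> consider "t = L" | "t = n" | "t < n - 1"
    unfolding S_def by auto
  ultimately show thesis
    using that by cases auto
qed

lemma take_truncated_valuation_eq_spiked:
  assumes "t \<le> j" and "j < n - 1"
  shows "take (Suc t) (truncated_valuation n \<epsilon> j) = take (Suc t) (spiked_valuation n \<epsilon> X)"
  unfolding truncated_valuation_def spiked_valuation_def
proof (rule take_completed_valuation_eq)
  show "t < 2*n - 2"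
    using assms by linarith
next
  fix s
  assume "s \<le> t"
  then have "s \<le> j" and "s \<noteq> n"
    using assms by linarith+
  then show "(if s \<le> j then \<epsilon> else 0) = (if s = n then X * \<epsilon> else \<epsilon>)"
    by simp
qed

lemma spiked_or_truncated_not_aEFX:
  fixes alg :: "real list \<Rightarrow> real list \<Rightarrow> nat" and n :: nat and \<epsilon> X :: real
  assumes agents: "\<forall>p vs. alg p vs < n" and "3 \<le> n" and "0 < a" and "a \<le> 1" and "0 < \<epsilon>"
    and spike_large: "2 * real n \<le> a * X" and total_small: "(real (2*n - 2) + X) * \<epsilon> \<le> a / 4"
  shows "\<not> is_aEFX a n (spiked_valuation n \<epsilon> X) (online_alloc alg p (spiked_valuation n \<epsilon> X)) \<or>
    (\<exists>j<n - 1. \<not> is_aEFX a n (truncated_valuation n \<epsilon> j)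
                         (online_alloc alg p (truncated_valuation n \<epsilon> j)))"
proof -
  define v where "v = spiked_valuation n \<epsilon> X"
  define f where "f t = alg p (take (Suc t) v)" for t
  have "0 < a * X"
    using spike_large \<open>3 \<le> n\<close> by linarith
  then have "0 < X"
    using \<open>0 < a\<close> by (simp add: zero_less_mult_iff)
  have "\<forall>t. f t < n" and "n < 2*n - 2"
    using agents \<open>3 \<le> n\<close> unfolding f_def by auto
  then show ?thesis
  proof (cases rule: agent_collision_cases)
    case (early i j)
    have "take (Suc t) (truncated_valuation n \<epsilon> j) = take (Suc t) v" if "t \<le> j" for t
      unfolding v_def using that \<open>j < n - 1\<close> by (rule take_truncated_valuation_eq_spiked)
    then have collision:
      "alg p (take (Suc i) (truncated_valuation n \<epsilon> j)) = alg p (take (Suc j) (truncated_valuation n \<epsilon> j))"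
      using \<open>f i = f j\<close> \<open>i < j\<close> unfolding f_def by simp
    have "0 < X * \<epsilon>"
      using \<open>0 < X\<close> \<open>0 < \<epsilon>\<close> by simp
    then have "real (2*n - 2) * \<epsilon> \<le> 1"
      using total_small \<open>a \<le> 1\<close> unfolding distrib_right by linarith
    then have "\<not> is_aEFX a n (truncated_valuation n \<epsilon> j) (online_alloc alg p (truncated_valuation n \<epsilon> j))"
      by (rule truncated_not_aEFX_if_collision[OF agents \<open>0 < a\<close> \<open>0 < \<epsilon>\<close> _ \<open>i < j\<close> \<open>j < n - 1\<close> collision])
    then show ?thesis
      using \<open>j < n - 1\<close> by blast
  next
    case (spike s)
    have "(real (2*n - 2) + X) * \<epsilon> \<le> 1"
      using total_small \<open>a \<le> 1\<close> by linarith
    then have "\<not> is_aEFX a n v (online_alloc alg p v)"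
      unfolding v_def
      using agents \<open>3 \<le> n\<close> \<open>0 < a\<close> \<open>0 < \<epsilon>\<close> \<open>0 < X\<close> spike_large spike
      by (intro spiked_not_aEFX_if_spike_shared[where s = s]) (simp_all add: f_def v_def)
    then show ?thesis
      unfolding v_def ..
  next
    case (last s)
    have "\<not> is_aEFX a n v (online_alloc alg p v)"
      unfolding v_def
      using agents \<open>3 \<le> n\<close> \<open>0 < a\<close> \<open>a \<le> 1\<close> \<open>0 < \<epsilon>\<close> \<open>0 < X\<close> total_small last
      by (intro spiked_not_aEFX_if_last_good_shared[where s = s]) (simp_all add: f_def v_def)
    then show ?thesis
      unfolding v_def ..
  qed
qed

lemma no_online_aEFX_under_positive_error:
  fixes alg :: "real list \<Rightarrow> real list \<Rightarrow> nat"
  assumes agents: "\<forall>p vs. alg p vs < n" and "3 \<le> n" and "0 < a" and "a \<le> 1" and "0 < err"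
  shows "\<exists>p v. valid_instance (2*n - 1) err p v \<and> \<not> is_aEFX a n v (online_alloc alg p v)"
proof -
  define X where "X = 2 * real n / a"
  define \<epsilon> where "\<epsilon> = min err (a / 4) / (real (2*n - 2) + X)"
  have "a * X = 2 * real n" and "2 * real n \<le> X"
    using \<open>0 < a\<close> \<open>a \<le> 1\<close> unfolding X_def by (simp_all add: le_divide_eq mult_left_le)
  then have "1 \<le> X" and "0 < real (2*n - 2) + X"
    using \<open>3 \<le> n\<close> by linarith+
  then have total: "(real (2*n - 2) + X) * \<epsilon> = min err (a / 4)" and "0 < \<epsilon>"
    using \<open>0 < err\<close> \<open>0 < a\<close> unfolding \<epsilon>_def by simp_all
  have "(real (2*n - 2) + X) * \<epsilon> \<le> a / 4"
    unfolding total by (rule min.cobounded2)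
  then have "\<not> is_aEFX a n (spiked_valuation n \<epsilon> X) (online_alloc alg p (spiked_valuation n \<epsilon> X)) \<or>
    (\<exists>j<n - 1. \<not> is_aEFX a n (truncated_valuation n \<epsilon> j)
                         (online_alloc alg p (truncated_valuation n \<epsilon> j)))" for p
    using agents \<open>3 \<le> n\<close> \<open>0 < a\<close> \<open>a \<le> 1\<close> \<open>0 < \<epsilon>\<close> \<open>a * X = 2 * real n\<close>
    by (intro spiked_or_truncated_not_aEFX) simp_all
  moreover have "valid_instance (2*n - 1) err (flat_prediction n \<epsilon>) (spiked_valuation n \<epsilon> X)"
    using \<open>3 \<le> n\<close> \<open>0 < \<epsilon>\<close> \<open>1 \<le> X\<close> \<open>a \<le> 1\<close> total
    by (intro valid_instance_spiked_valuation) auto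
  moreover have "valid_instance (2*n - 1) err (flat_prediction n \<epsilon>) (truncated_valuation n \<epsilon> j)" for j
  proof (rule valid_instance_truncated_valuation)
    have "0 \<le> X * \<epsilon>"
      using \<open>1 \<le> X\<close> \<open>0 < \<epsilon>\<close> by simp
    then show "real (2*n - 2) * \<epsilon> \<le> min err 1"
      using total \<open>a \<le> 1\<close> unfolding distrib_right by linarith
  qed (use \<open>3 \<le> n\<close> \<open>0 < \<epsilon>\<close> in auto)
  ultimately show ?thesis
    by blast
qed

theorem lemma4p8:
  fixes n :: nat and a \<eta> :: real
  assumes "n \<ge> 3" and "0 < a" and "a \<le> 1"
    and "\<eta> < 1 - (1 - a^2) / (4 + (2 * real n - 3) * a)"
  shows "\<forall>alg :: real list \<Rightarrow> real list \<Rightarrow> nat.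
           (\<forall>p vs. alg p vs < n) \<longrightarrow>
           (\<exists>p v. length p = 2*n - 1 \<and> length v = 2*n - 1 \<and>
                  normalized_valuation p \<and> normalized_valuation v \<and>
                  k_value 3 p \<and> k_value 3 v \<and>
                  pred_error p v \<le> 1 - \<eta> \<and>
                  \<not> is_aEFX a n v (online_alloc alg p v))"
proof -
  have "0 < 4 + (2 * real n - 3) * a"
    using \<open>n \<ge> 3\<close> \<open>0 < a\<close> by (simp add: add_pos_pos)
  moreover have "a^2 \<le> 1"
    using \<open>0 < a\<close> \<open>a \<le> 1\<close> by (simp add: power_le_one)
  ultimately have "0 \<le> (1 - a^2) / (4 + (2 * real n - 3) * a)"
    by simp
  then have "0 < 1 - \<eta>"
    using assms(4) by linarith
  then show ?thesis
    using no_online_aEFX_under_positive_error \<open>n \<ge> 3\<close> \<open>0 < a\<close> \<open>a \<le> 1\<close>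
    unfolding valid_instance_def by blast
qed

end
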